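(* Let $\Sigma$ be a finite alphabet, $p\in\Sigma^{++}$ and $\theta=\llbracket\hat p\rrbracket$. Then $p$ is regional (i.e. admits a regional homogeneous partition) if and only if both directed graphs with vertex set $\Sigma$ and edge relations $\mathcal A_\theta\cap\Sigma^2$ and $\mathcal A'_\theta\cap\Sigma^2$, respectively, are acyclic.
   Context: A picture over $\Sigma$ is a nonempty rectangular array of symbols of $\Sigma$, $\Sigma^{++}$ the set of all of them; $p(i,j)$ is the pixel in row $i$, column $j$; for $\#\notin\Sigma$, $\hat p$ is $p$ surrounded by a one-pixel frame of $\#$'s. A tile is a $2\times 2$ picture; $\llbracket q\rrbracket$ is the set of all $2\times2$ subpictures (on consecutive rows and columns) of $q$. A subdomain of $p$ is a rectangle $\{x,\dots,x'\}\times\{y,\dots,y'\}$ of positions; it is $C$-homogeneous (label $C$) if all its pixels equal $C$. A homogeneous partition of $p$ is a partition of its set of positions into homogeneous subdomains; it is regional if distinct subdomains have distinct labels; $p$ is regional if it admits a regional homogeneous partition. Adjacency relations: for a tile $t$ over $\Sigma\cup\{\#\}$ define relations $\mathcal H_t,\mathcal V_t\subseteq(\Sigma\cup\{\#\})^2$ by: for $i=1,2$, $t(i,1)\,\mathcal H_t\,t(i,2)$ iff $t(i,1)\ne t(i,2)$; for $j=1,2$, $t(1,j)\,\mathcal V_t\,t(2,j)$ iff $t(1,j)\neq t(2,j)$ (and these are the only pairs). Let $\mathcal A_t=\mathcal H_t\cup\mathcal V_t$ and $\mathcal A'_t=\mathcal H_t^{-1}\cup\mathcal V_t$. For a set $\theta$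 of tiles, $x\,\mathcal H_\theta\,y$ iff $x\,\mathcal H_t\,y$ for some $t\in\theta$, and similarly for $\mathcal V_\theta,\mathcal A_\theta,\mathcal A'_\theta$. A tile set $\theta$ for which the graphs of $\mathcal A_\theta\cap\Sigma^2$ and $\mathcal A'_\theta\cap\Sigma^2$ are both acyclic is called simple regional. *)

theory Defs
  imports Main
begin

(* A picture of size m x n is a function p :: nat => nat => 'a, meaningful on
   rows 1..m and columns 1..n. *)
definition is_picture :: "'a set \<Rightarrow> nat \<Rightarrow> nat \<Rightarrow> (nat \<Rightarrow> nat \<Rightarrow> 'a) \<Rightarrow> bool" where
  "is_picture \<Sigma> m n p \<longleftrightarrow> 1 \<le> m \<and> 1 \<le> n \<and> (\<forall>i\<in>{1..m}. \<forall>j\<in>{1..n}. p i j \<in> \<Sigma>)"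

(* framed picture \<hat>p, of size (m+2) x (n+2), rows/columns 1..m+2 / 1..n+2;
   the border symbol # is None, symbols of \<Sigma> are embedded via Some *)
definition frame :: "nat \<Rightarrow> nat \<Rightarrow> (nat \<Rightarrow> nat \<Rightarrow> 'a) \<Rightarrow> nat \<Rightarrow> nat \<Rightarrow> 'a option" where
  "frame m n p i j = (if 2 \<le> i \<and> i \<le> m + 1 \<and> 2 \<le> j \<and> j \<le> n + 1
                      then Some (p (i - 1) (j - 1)) else None)"

(* a tile t is represented as (t(1,1), t(1,2), t(2,1), t(2,2)) *)
type_synonym 'b tile = "'b \<times> 'b \<times> 'b \<times> 'b"

definition tiles :: "nat \<Rightarrow> nat \<Rightarrow> (nat \<Rightarrow> nat \<Rightarrow> 'b) \<Rightarrow> 'b tile set" where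
  "tiles r c q = {(q i j, q i (j + 1), q (i + 1) j, q (i + 1) (j + 1)) | i j.
                    1 \<le> i \<and> i < r \<and> 1 \<le> j \<and> j < c}"

fun H_tile :: "'b tile \<Rightarrow> ('b \<times> 'b) set" where
  "H_tile (a, b, c, d) = {(x, y). ((x, y) = (a, b) \<and> a \<noteq> b) \<or> ((x, y) = (c, d) \<and> c \<noteq> d)}"

fun V_tile :: "'b tile \<Rightarrow> ('b \<times> 'b) set" where
  "V_tile (a, b, c, d) = {(x, y). ((x, y) = (a, c) \<and> a \<noteq> c) \<or> ((x, y) = (b, d) \<and> b \<noteq> d)}"

definition A_tile :: "'b tile \<Rightarrow> ('b \<times> 'b) set" where
  "A_tile t = H_tile t \<union> V_tile t"

definition A'_tile :: "'b tile \<Rightarrow> ('b \<times> 'b) set" where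
  "A'_tile t = (H_tile t)\<inverse> \<union> V_tile t"

definition A_set :: "'b tile set \<Rightarrow> ('b \<times> 'b) set" where
  "A_set \<theta> = (\<Union>t\<in>\<theta>. A_tile t)"

definition A'_set :: "'b tile set \<Rightarrow> ('b \<times> 'b) set" where
  "A'_set \<theta> = (\<Union>t\<in>\<theta>. A'_tile t)"

(* R \<inter> \<Sigma>^2, with \<Sigma> embedded in \<Sigma> \<union> {#} via Some *)
definition restrict_sigma :: "'a set \<Rightarrow> ('a option \<times> 'a option) set \<Rightarrow> ('a \<times> 'a) set" where
  "restrict_sigma \<Sigma> R = {(x, y). x \<in> \<Sigma> \<and> y \<in> \<Sigma> \<and> (Some x, Some y) \<in> R}"

definition is_subdomain :: "nat \<Rightarrow> nat \<Rightarrow> (nat \<times> nat) set \<Rightarrow> bool" where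
  "is_subdomain m n D \<longleftrightarrow> (\<exists>x x' y y'. 1 \<le> x \<and> x \<le> x' \<and> x' \<le> m \<and> 1 \<le> y \<and> y \<le> y' \<and> y' \<le> n
                                 \<and> D = {x..x'} \<times> {y..y'})"

definition homogeneous :: "(nat \<Rightarrow> nat \<Rightarrow> 'a) \<Rightarrow> (nat \<times> nat) set \<Rightarrow> 'a \<Rightarrow> bool" where
  "homogeneous p D C \<longleftrightarrow> (\<forall>(i, j)\<in>D. p i j = C)"

definition homogeneous_partition ::
  "nat \<Rightarrow> nat \<Rightarrow> (nat \<Rightarrow> nat \<Rightarrow> 'a) \<Rightarrow> (nat \<times> nat) set set \<Rightarrow> bool" where
  "homogeneous_partition m n p P \<longleftrightarrow>
     (\<forall>D\<in>P. is_subdomain m n D \<and> (\<exists>C. homogeneous p D C)) \<and>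
     (\<forall>D\<in>P. \<forall>D'\<in>P. D \<noteq> D' \<longrightarrow> D \<inter> D' = {}) \<and>
     \<Union>P = {1..m} \<times> {1..n}"

definition regional_partition ::
  "nat \<Rightarrow> nat \<Rightarrow> (nat \<Rightarrow> nat \<Rightarrow> 'a) \<Rightarrow> (nat \<times> nat) set set \<Rightarrow> bool" where
  "regional_partition m n p P \<longleftrightarrow> homogeneous_partition m n p P \<and>
     (\<forall>D\<in>P. \<forall>D'\<in>P. \<forall>C C'. D \<noteq> D' \<longrightarrow> homogeneous p D C \<longrightarrow> homogeneous p D' C' \<longrightarrow> C \<noteq> C')"

definition regional :: "nat \<Rightarrow> nat \<Rightarrow> (nat \<Rightarrow> nat \<Rightarrow> 'a) \<Rightarrow> bool" where
  "regional m n p \<longleftrightarrow> (\<exists>P. regional_partition m n p P)"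

end

theory Submission
  imports Defs "HOL-Library.Product_Order"
begin

(* The proof first computes the two graphs: A_set of the tiles of any picture is the set of
   horizontally adjacent pairs (left, right) plus vertically adjacent pairs (top, bottom) of
   distinct symbols; A'_set reverses the horizontal pairs.  Restricting to \<Sigma> removes all
   pairs involving the frame symbol, so the graphs are exactly the neighbour graphs of p.
   Next, p is regional iff every colour class (set of positions carrying one symbol) is a
   rectangle; the classes then form a regional partition.
   (<=) If both graphs are acyclic, a position between two occurrences of c is reachable
   from c and reaches c along monotone paths (down-right in A, down-left in A'), so it
   carries c; hence colour classes are box-closed, i.e. rectangles.
   (=>) If p is regional, an edge of A from c to d means the rectangle of c is weakly
   above-left of that of d; among finitely many pairwise disjoint rectangles this dominance
   relation is acyclic, since some rectangle is never dominated.  For A' the column order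
   is reversed. *)

definition horiz_pairs :: "nat \<Rightarrow> nat \<Rightarrow> (nat \<Rightarrow> nat \<Rightarrow> 'b) \<Rightarrow> ('b \<times> 'b) set" where
  "horiz_pairs r c q = {(q i j, q i (j + 1)) | i j.
     1 \<le> i \<and> i \<le> r \<and> 1 \<le> j \<and> j < c \<and> q i j \<noteq> q i (j + 1)}"

definition vert_pairs :: "nat \<Rightarrow> nat \<Rightarrow> (nat \<Rightarrow> nat \<Rightarrow> 'b) \<Rightarrow> ('b \<times> 'b) set" where
  "vert_pairs r c q = {(q i j, q (i + 1) j) | i j.
     1 \<le> i \<and> i < r \<and> 1 \<le> j \<and> j \<le> c \<and> q i j \<noteq> q (i + 1) j}"

(* Every horizontal neighbour pair lies in the top or bottom row of some tile. *)
lemma H_tiles: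
  assumes "2 \<le> r"
  shows "(\<Union>t\<in>tiles r c q. H_tile t) = horiz_pairs r c q"
proof
  show "(\<Union>t\<in>tiles r c q. H_tile t) \<subseteq> horiz_pairs r c q"
    unfolding tiles_def horiz_pairs_def by fastforce
next
  show "horiz_pairs r c q \<subseteq> (\<Union>t\<in>tiles r c q. H_tile t)"
    unfolding horiz_pairs_def
  proof clarify
    fix i j assume ij: "1 \<le> i" "i \<le> r" "1 \<le> j" "j < c" "q i j \<noteq> q i (j + 1)"
    show "(q i j, q i (j + 1)) \<in> (\<Union>t\<in>tiles r c q. H_tile t)"
    proof (cases "i < r")
      case True
      then show ?thesis using ij unfolding tiles_def by fastforce
    next
      case False
      then have "i = (i - 1) + 1" "1 \<le> i - 1" "i - 1 < r" using ij assms by auto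
      then show ?thesis using ij unfolding tiles_def
        by (fastforce intro!: bexI[of _ "(q (i - 1) j, q (i - 1) (j + 1), q i j, q i (j + 1))"])
    qed
  qed
qed

(* Every vertical neighbour pair lies in the left or right column of some tile. *)
lemma V_tiles:
  assumes "2 \<le> c"
  shows "(\<Union>t\<in>tiles r c q. V_tile t) = vert_pairs r c q"
proof
  show "(\<Union>t\<in>tiles r c q. V_tile t) \<subseteq> vert_pairs r c q"
    unfolding tiles_def vert_pairs_def by fastforce
next
  show "vert_pairs r c q \<subseteq> (\<Union>t\<in>tiles r c q. V_tile t)"
    unfolding vert_pairs_def
  proof clarify
    fix i j assume ij: "1 \<le> i" "i < r" "1 \<le> j" "j \<le> c" "q i j \<noteq> q (i + 1) j"
    show "(q i j, q (i + 1) j) \<in> (\<Union>t\<in>tiles r c q. V_tile t)"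
    proof (cases "j < c")
      case True
      then show ?thesis using ij unfolding tiles_def by fastforce
    next
      case False
      then have "j = (j - 1) + 1" "1 \<le> j - 1" "j - 1 < c" using ij assms by auto
      then show ?thesis using ij unfolding tiles_def
        by (fastforce intro!: bexI[of _ "(q i (j - 1), q i j, q (i + 1) (j - 1), q (i + 1) j)"])
    qed
  qed
qed

lemma A_set_tiles:
  assumes "2 \<le> r" "2 \<le> c"
  shows "A_set (tiles r c q) = horiz_pairs r c q \<union> vert_pairs r c q"
  unfolding A_set_def A_tile_def UN_Un_distrib H_tiles[OF assms(1)] V_tiles[OF assms(2)] ..

lemma A'_set_tiles:
  assumes "2 \<le> r" "2 \<le> c"
  shows "A'_set (tiles r c q) = (horiz_pairs r c q)\<inverse> \<union> vert_pairs r c q"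
  unfolding A'_set_def A'_tile_def UN_Un_distrib converse_UNION[symmetric]
    H_tiles[OF assms(1)] V_tiles[OF assms(2)] ..

lemma frame_eq_Some:
  "frame m n p i j = Some x \<longleftrightarrow>
     2 \<le> i \<and> i \<le> m + 1 \<and> 2 \<le> j \<and> j \<le> n + 1 \<and> x = p (i - 1) (j - 1)"
  by (auto simp: frame_def)

lemma restrict_sigma_Un: "restrict_sigma \<Sigma> (R \<union> S) = restrict_sigma \<Sigma> R \<union> restrict_sigma \<Sigma> S"
  by (auto simp: restrict_sigma_def)

lemma restrict_sigma_converse: "restrict_sigma \<Sigma> (R\<inverse>) = (restrict_sigma \<Sigma> R)\<inverse>"
  by (auto simp: restrict_sigma_def)

lemma restrict_frame_horiz:
  assumes "is_picture \<Sigma> m n p"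
  shows "restrict_sigma \<Sigma> (horiz_pairs (m + 2) (n + 2) (frame m n p)) = horiz_pairs m n p"
proof
  show "restrict_sigma \<Sigma> (horiz_pairs (m + 2) (n + 2) (frame m n p)) \<subseteq> horiz_pairs m n p"
  proof
    fix e assume "e \<in> restrict_sigma \<Sigma> (horiz_pairs (m + 2) (n + 2) (frame m n p))"
    then obtain x y i j where e: "e = (x, y)" "x \<noteq> y"
      and "frame m n p i j = Some x" "frame m n p i (j + 1) = Some y"
      unfolding restrict_sigma_def horiz_pairs_def by force
    then have "2 \<le> i" "i \<le> m + 1" "2 \<le> j" "j \<le> n" "x = p (i - 1) (j - 1)" "y = p (i - 1) j"
      unfolding frame_eq_Some by auto
    then show "e \<in> horiz_pairs m n p"
      using e unfolding horiz_pairs_def by (intro CollectI exI[of _ "i - 1"] exI[of _ "j - 1"]) auto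
  qed
next
  show "horiz_pairs m n p \<subseteq> restrict_sigma \<Sigma> (horiz_pairs (m + 2) (n + 2) (frame m n p))"
    using assms unfolding restrict_sigma_def horiz_pairs_def is_picture_def
    by (fastforce intro!: exI[of _ "i + 1" for i] simp: frame_def)
qed

lemma restrict_frame_vert:
  assumes "is_picture \<Sigma> m n p"
  shows "restrict_sigma \<Sigma> (vert_pairs (m + 2) (n + 2) (frame m n p)) = vert_pairs m n p"
proof
  show "restrict_sigma \<Sigma> (vert_pairs (m + 2) (n + 2) (frame m n p)) \<subseteq> vert_pairs m n p"
  proof
    fix e assume "e \<in> restrict_sigma \<Sigma> (vert_pairs (m + 2) (n + 2) (frame m n p))"
    then obtain x y i j where e: "e = (x, y)" "x \<noteq> y"
      and "frame m n p i j = Some x" "frame m n p (i + 1) j = Some y"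
      unfolding restrict_sigma_def vert_pairs_def by force
    then have "2 \<le> i" "i \<le> m" "2 \<le> j" "j \<le> n + 1" "x = p (i - 1) (j - 1)" "y = p i (j - 1)"
      unfolding frame_eq_Some by auto
    then show "e \<in> vert_pairs m n p"
      using e unfolding vert_pairs_def by (intro CollectI exI[of _ "i - 1"] exI[of _ "j - 1"]) auto
  qed
next
  show "vert_pairs m n p \<subseteq> restrict_sigma \<Sigma> (vert_pairs (m + 2) (n + 2) (frame m n p))"
    using assms unfolding restrict_sigma_def vert_pairs_def is_picture_def
    by (fastforce intro!: exI[of _ "i + 1" for i] simp: frame_def)
qed

lemma adjacency_graphs_of_picture:
  assumes "is_picture \<Sigma> m n p"
  shows "restrict_sigma \<Sigma> (A_set (tiles (m + 2) (n + 2) (frame m n p)))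
           = horiz_pairs m n p \<union> vert_pairs m n p"
    and "restrict_sigma \<Sigma> (A'_set (tiles (m + 2) (n + 2) (frame m n p)))
           = (horiz_pairs m n p)\<inverse> \<union> vert_pairs m n p"
  unfolding A_set_tiles[OF le_add2 le_add2] A'_set_tiles[OF le_add2 le_add2]
    restrict_sigma_Un restrict_sigma_converse
    restrict_frame_horiz[OF assms] restrict_frame_vert[OF assms] by (rule refl)+

definition colour_class :: "nat \<Rightarrow> nat \<Rightarrow> (nat \<Rightarrow> nat \<Rightarrow> 'a) \<Rightarrow> 'a \<Rightarrow> (nat \<times> nat) set" where
  "colour_class m n p c = {(i, j) \<in> {1..m} \<times> {1..n}. p i j = c}"

lemma subdomain_subset: "is_subdomain m n D \<Longrightarrow> D \<subseteq> {1..m} \<times> {1..n}"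
  unfolding is_subdomain_def by auto

lemma homogeneousD: "homogeneous p D C \<Longrightarrow> (i, j) \<in> D \<Longrightarrow> p i j = C"
  unfolding homogeneous_def by auto

(* In a regional partition, the block containing a position is the whole colour class
   of its symbol: labels are distinct, so no other block can carry that symbol. *)
lemma block_eq_colour_class:
  assumes "regional_partition m n p P" "D \<in> P" "(i, j) \<in> D"
  shows "D = colour_class m n p (p i j)"
proof
  from assms(1) have part: "homogeneous_partition m n p P"
    and distinct_labels: "\<And>D D' C C'. D \<in> P \<Longrightarrow> D' \<in> P \<Longrightarrow> D \<noteq> D' \<Longrightarrow>
        homogeneous p D C \<Longrightarrow> homogeneous p D' C' \<Longrightarrow> C \<noteq> C'"
    unfolding regional_partition_def by blast+
  have blocks: "\<And>D. D \<in> P \<Longrightarrow> D \<subseteq> {1..m} \<times> {1..n} \<and> (\<exists>C. homogeneous p D C)"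
    and cover: "\<Union>P = {1..m} \<times> {1..n}"
    using part subdomain_subset unfolding homogeneous_partition_def by blast+
  have hom_any: "homogeneous p D' (p a b)" if D': "D' \<in> P" "(a, b) \<in> D'" for D' a b
  proof -
    obtain C where C: "homogeneous p D' C" using blocks[OF D'(1)] by blast
    then show ?thesis using homogeneousD[OF C D'(2)] by simp
  qed
  have hom: "homogeneous p D (p i j)" using hom_any[OF assms(2,3)] .
  show "D \<subseteq> colour_class m n p (p i j)"
    using hom blocks[OF assms(2)] unfolding homogeneous_def colour_class_def by blast
  show "colour_class m n p (p i j) \<subseteq> D"
  proof clarify
    fix a b assume ab: "(a, b) \<in> colour_class m n p (p i j)"
    then obtain D' where D': "D' \<in> P" "(a, b) \<in> D'"
      using cover unfolding colour_class_def by blast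
    have "p a b = p i j" using ab unfolding colour_class_def by simp
    then have "homogeneous p D' (p i j)" using hom_any[OF D'] by simp
    then have "D' = D" using distinct_labels[OF D'(1) assms(2) _ _ hom] by blast
    then show "(a, b) \<in> D" using D' by simp
  qed
qed

lemma regional_iff_colour_classes:
  "regional m n p \<longleftrightarrow>
     (\<forall>(i, j) \<in> {1..m} \<times> {1..n}. is_subdomain m n (colour_class m n p (p i j)))"
proof
  assume "regional m n p"
  then obtain P where P: "regional_partition m n p P" unfolding regional_def by blast
  then have cover: "\<Union>P = {1..m} \<times> {1..n}" and subdomains: "\<And>D. D \<in> P \<Longrightarrow> is_subdomain m n D"
    unfolding regional_partition_def homogeneous_partition_def by blast+
  show "\<forall>(i, j) \<in> {1..m} \<times> {1..n}. is_subdomain m n (colour_class m n p (p i j))"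
  proof clarify
    fix i j assume "i \<in> {1..m}" "j \<in> {1..n}"
    then obtain D where "D \<in> P" "(i, j) \<in> D" using cover by blast
    then show "is_subdomain m n (colour_class m n p (p i j))"
      using block_eq_colour_class[OF P] subdomains by metis
  qed
next
  assume rect: "\<forall>(i, j) \<in> {1..m} \<times> {1..n}. is_subdomain m n (colour_class m n p (p i j))"
  define P where "P = (\<lambda>(i, j). colour_class m n p (p i j)) ` ({1..m} \<times> {1..n})"
  have "homogeneous_partition m n p P"
    unfolding homogeneous_partition_def
  proof (intro conjI)
    show "\<forall>D\<in>P. is_subdomain m n D \<and> (\<exists>C. homogeneous p D C)"
      using rect unfolding P_def homogeneous_def colour_class_def by auto
    show "\<forall>D\<in>P. \<forall>D'\<in>P. D \<noteq> D' \<longrightarrow> D \<inter> D' = {}"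
      unfolding P_def colour_class_def by auto
    show "\<Union>P = {1..m} \<times> {1..n}"
      unfolding P_def colour_class_def by auto
  qed
  moreover have "\<forall>D\<in>P. \<forall>D'\<in>P. \<forall>C C'. D \<noteq> D' \<longrightarrow> homogeneous p D C \<longrightarrow> homogeneous p D' C' \<longrightarrow> C \<noteq> C'"
    unfolding P_def colour_class_def homogeneous_def by fastforce
  ultimately show "regional m n p"
    unfolding regional_def regional_partition_def by blast
qed

(* A nonempty set of positions containing, with any two points, the rectangle they span
   is a subdomain: it is the rectangle spanned by its extreme coordinates. *)
lemma box_closed_imp_subdomain:
  fixes S :: "(nat \<times> nat) set"
  assumes sub: "S \<subseteq> {1..m} \<times> {1..n}" and ne: "S \<noteq> {}"
    and box: "\<And>i1 j1 i2 j2 i j. (i1, j1) \<in> S \<Longrightarrow> (i2, j2) \<in> S \<Longrightarrow>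
      min i1 i2 \<le> i \<Longrightarrow> i \<le> max i1 i2 \<Longrightarrow> min j1 j2 \<le> j \<Longrightarrow> j \<le> max j1 j2 \<Longrightarrow> (i, j) \<in> S"
  shows "is_subdomain m n S"
proof -
  have fin: "finite S" using sub finite_subset by blast
  define x where "x = Min (fst ` S)"
  define x' where "x' = Max (fst ` S)"
  define y where "y = Min (snd ` S)"
  define y' where "y' = Max (snd ` S)"
  have "x \<in> fst ` S" "x' \<in> fst ` S" "y \<in> snd ` S" "y' \<in> snd ` S"
    unfolding x_def x'_def y_def y'_def using fin ne by simp_all
  then obtain jx jx' iy iy' where extremal: "(x, jx) \<in> S" "(x', jx') \<in> S" "(iy, y) \<in> S" "(iy', y') \<in> S"
    by force
  have bounds: "x \<le> i \<and> i \<le> x' \<and> y \<le> j \<and> j \<le> y'" if "(i, j) \<in> S" for i j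
  proof -
    have "i \<in> fst ` S" "j \<in> snd ` S" using that by force+
    then show ?thesis unfolding x_def x'_def y_def y'_def using fin by simp
  qed
  have "S = {x..x'} \<times> {y..y'}"
  proof
    show "S \<subseteq> {x..x'} \<times> {y..y'}" using bounds by auto
  next
    show "{x..x'} \<times> {y..y'} \<subseteq> S"
    proof clarify
      fix i j assume ij: "i \<in> {x..x'}" "j \<in> {y..y'}"
      have "(i, jx) \<in> S" using box[OF extremal(1,2), of i jx] ij by auto
      moreover have "(iy, j) \<in> S" using box[OF extremal(3,4), of iy j] ij by auto
      ultimately show "(i, j) \<in> S" using box[of i jx iy j i j] by auto
    qed
  qed
  moreover have "1 \<le> x" "x \<le> x'" "x' \<le> m" "1 \<le> y" "y \<le> y'" "y' \<le> n"
    using sub bounds extremal by force+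
  ultimately show ?thesis unfolding is_subdomain_def by blast
qed

lemma row_path:
  assumes "1 \<le> i" "i \<le> m" "1 \<le> j1" "j1 \<le> j2" "j2 \<le> n"
  shows "(p i j1, p i j2) \<in> (horiz_pairs m n p)\<^sup>*"
  using assms(4,5)
proof (induction j2 rule: dec_induct)
  case base
  then show ?case by simp
next
  case (step k)
  have "(p i k, p i (Suc k)) \<in> (horiz_pairs m n p)\<^sup>="
    using assms step unfolding horiz_pairs_def by force
  then show ?case using step by (auto intro: rtrancl_into_rtrancl)
qed

lemma column_path:
  assumes "1 \<le> j" "j \<le> n" "1 \<le> i1" "i1 \<le> i2" "i2 \<le> m"
  shows "(p i1 j, p i2 j) \<in> (vert_pairs m n p)\<^sup>*"
  using assms(4,5)
proof (induction i2 rule: dec_induct)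
  case base
  then show ?case by simp
next
  case (step k)
  have "(p k j, p (Suc k) j) \<in> (vert_pairs m n p)\<^sup>="
    using assms step unfolding vert_pairs_def by force
  then show ?case using step by (auto intro: rtrancl_into_rtrancl)
qed

lemma path_down_right:
  assumes "1 \<le> i1" "i1 \<le> i2" "i2 \<le> m" "1 \<le> j1" "j1 \<le> j2" "j2 \<le> n"
  shows "(p i1 j1, p i2 j2) \<in> (horiz_pairs m n p \<union> vert_pairs m n p)\<^sup>*"
proof -
  have "(p i1 j1, p i1 j2) \<in> (horiz_pairs m n p \<union> vert_pairs m n p)\<^sup>*"
    using row_path[of i1 m j1 j2 n p] assms rtrancl_mono[of "horiz_pairs m n p"] by auto
  also have "(p i1 j2, p i2 j2) \<in> (horiz_pairs m n p \<union> vert_pairs m n p)\<^sup>*"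
    using column_path[of j2 n i1 i2 m p] assms rtrancl_mono[of "vert_pairs m n p"] by auto
  finally show ?thesis .
qed

lemma path_down_left:
  assumes "1 \<le> i1" "i1 \<le> i2" "i2 \<le> m" "1 \<le> j2" "j2 \<le> j1" "j1 \<le> n"
  shows "(p i1 j1, p i2 j2) \<in> ((horiz_pairs m n p)\<inverse> \<union> vert_pairs m n p)\<^sup>*"
proof -
  have "(p i1 j1, p i1 j2) \<in> ((horiz_pairs m n p)\<inverse>)\<^sup>*"
    using row_path[of i1 m j2 j1 n p] assms by (simp add: rtrancl_converse)
  then have "(p i1 j1, p i1 j2) \<in> ((horiz_pairs m n p)\<inverse> \<union> vert_pairs m n p)\<^sup>*"
    using rtrancl_mono[of "(horiz_pairs m n p)\<inverse>"] by auto
  also have "(p i1 j2, p i2 j2) \<in> ((horiz_pairs m n p)\<inverse> \<union> vert_pairs m n p)\<^sup>*"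
    using column_path[of j2 n i1 i2 m p] assms rtrancl_mono[of "vert_pairs m n p"] by auto
  finally show ?thesis .
qed

lemma acyclic_cycle_eq: "acyclic R \<Longrightarrow> (a, b) \<in> R\<^sup>* \<Longrightarrow> (b, a) \<in> R\<^sup>* \<Longrightarrow> a = b"
  by (metis acyclic_impl_antisym_rtrancl antisymD)

(* If both graphs are acyclic, every position between two occurrences of c (the first
   one in a row above the second) carries c: it lies on a monotone path from c back to c. *)
lemma colour_class_box_closed:
  assumes acyclic: "acyclic (horiz_pairs m n p \<union> vert_pairs m n p)"
      "acyclic ((horiz_pairs m n p)\<inverse> \<union> vert_pairs m n p)"
    and corners: "(i1, j1) \<in> colour_class m n p c" "(i2, j2) \<in> colour_class m n p c"
    and between: "i1 \<le> i" "i \<le> i2" "min j1 j2 \<le> j" "j \<le> max j1 j2"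
  shows "(i, j) \<in> colour_class m n p c"
proof -
  have range: "1 \<le> i1" "i2 \<le> m" "1 \<le> j1" "j1 \<le> n" "1 \<le> j2" "j2 \<le> n"
    and colour: "p i1 j1 = c" "p i2 j2 = c"
    using corners unfolding colour_class_def by auto
  have "p i j = c"
  proof (cases "j1 \<le> j2")
    case True
    then have "(c, p i j) \<in> (horiz_pairs m n p \<union> vert_pairs m n p)\<^sup>*"
      and "(p i j, c) \<in> (horiz_pairs m n p \<union> vert_pairs m n p)\<^sup>*"
      using path_down_right[of i1 i m j1 j n p] path_down_right[of i i2 m j j2 n p]
        range colour between by auto
    then show ?thesis using acyclic_cycle_eq[OF acyclic(1)] by blast
  next
    case False
    then have "(c, p i j) \<in> ((horiz_pairs m n p)\<inverse> \<union> vert_pairs m n p)\<^sup>*"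
      and "(p i j, c) \<in> ((horiz_pairs m n p)\<inverse> \<union> vert_pairs m n p)\<^sup>*"
      using path_down_left[of i1 i m j j1 n p] path_down_left[of i i2 m j2 j n p]
        range colour between by auto
    then show ?thesis using acyclic_cycle_eq[OF acyclic(2)] by blast
  qed
  then show ?thesis using range between unfolding colour_class_def by auto
qed

lemma acyclic_imp_regional:
  assumes acyclic: "acyclic (horiz_pairs m n p \<union> vert_pairs m n p)"
      "acyclic ((horiz_pairs m n p)\<inverse> \<union> vert_pairs m n p)"
  shows "regional m n p"
  unfolding regional_iff_colour_classes
proof clarify
  fix i j assume "i \<in> {1..m}" "j \<in> {1..n}"
  then show "is_subdomain m n (colour_class m n p (p i j))"
  proof (intro box_closed_imp_subdomain)
    fix i1 j1 i2 j2 i' j'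
    assume corners: "(i1, j1) \<in> colour_class m n p (p i j)" "(i2, j2) \<in> colour_class m n p (p i j)"
      and between: "min i1 i2 \<le> i'" "i' \<le> max i1 i2" "min j1 j2 \<le> j'" "j' \<le> max j1 j2"
    show "(i', j') \<in> colour_class m n p (p i j)"
    proof (cases "i1 \<le> i2")
      case True
      then show ?thesis using colour_class_box_closed[OF acyclic corners] between by simp
    next
      case False
      then show ?thesis using colour_class_box_closed[OF acyclic corners(2,1)] between
        by (simp add: min.commute max.commute)
    qed
  qed (auto simp: colour_class_def)
qed

(* Take c with least first upper coordinate; if c dominates the undominated box of the
   remaining ones, then c itself is undominated. *)
lemma undominated_box_exists:
  fixes lo hi :: "'x \<Rightarrow> 'a::linorder \<times> 'b::linorder"
  assumes "finite S" "S \<noteq> {}"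
    and "\<forall>c\<in>S. lo c \<le> hi c"
    and "\<forall>c\<in>S. \<forall>d\<in>S. c \<noteq> d \<longrightarrow> \<not> (lo c \<le> hi d \<and> lo d \<le> hi c)"
  shows "\<exists>b\<in>S. \<forall>z\<in>S. z \<noteq> b \<longrightarrow> \<not> lo z \<le> hi b"
  using assms
proof (induction S rule: finite_remove_induct)
  case empty
  then show ?case by simp
next
  case (remove S)
  note nonempty = remove.prems(2) and disjoint = remove.prems(3)
  define c where "c = arg_min_on (fst \<circ> hi) S"
  have c: "c \<in> S"
    unfolding c_def using arg_min_if_finite(1) remove.hyps(1) remove.prems(1) by blast
  have c_min: "fst (hi c) \<le> fst (hi d)" if "d \<in> S" for d
    unfolding c_def using arg_min_least[OF remove.hyps(1) remove.prems(1) that, of "fst \<circ> hi"] by simp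
  show ?case
  proof (cases "S - {c} = {}")
    case True
    then show ?thesis using c by auto
  next
    case False
    have "\<exists>b\<in>S - {c}. \<forall>z\<in>S - {c}. z \<noteq> b \<longrightarrow> \<not> lo z \<le> hi b"
      by (rule remove.IH[OF c False]) (use nonempty disjoint in blast)+
    then obtain b where b: "b \<in> S" "b \<noteq> c"
      and b_undom: "\<And>z. z \<in> S \<Longrightarrow> z \<noteq> c \<Longrightarrow> z \<noteq> b \<Longrightarrow> \<not> lo z \<le> hi b"
      by blast
    show ?thesis
    proof (cases "lo c \<le> hi b")
      case False
      then show ?thesis using b b_undom by blast
    next
      case c_dom_b: True
      have "\<not> lo z \<le> hi c" if z: "z \<in> S" "z \<noteq> c" for z
      proof
        assume z_dom_c: "lo z \<le> hi c"
        have "lo c \<le> hi c" "lo z \<le> hi z" using nonempty c z(1) by blast+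
        have "fst (lo c) \<le> fst (hi z)"
          using \<open>lo c \<le> hi c\<close> c_min[OF z(1)] unfolding less_eq_prod_def by (meson order_trans)
        moreover have "\<not> lo c \<le> hi z"
          using disjoint z c z_dom_c by blast
        ultimately have "snd (hi z) < snd (lo c)"
          unfolding less_eq_prod_def by (meson not_le)
        then have "lo z \<le> hi b"
          using z_dom_c c_dom_b c_min[OF b(1)] \<open>lo z \<le> hi z\<close>
          unfolding less_eq_prod_def by (meson order_trans less_imp_le)
        moreover have "z \<noteq> b"
          using disjoint b c c_dom_b z_dom_c by blast
        ultimately show False
          using b_undom[OF z] by blast
      qed
      then show ?thesis using c by blast
    qed
  qed
qed

lemma dominance_acyclic:
  fixes lo hi :: "'x \<Rightarrow> 'a::linorder \<times> 'b::linorder"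
  assumes "finite K"
    and "\<forall>c\<in>K. lo c \<le> hi c"
    and "\<forall>c\<in>K. \<forall>d\<in>K. c \<noteq> d \<longrightarrow> \<not> (lo c \<le> hi d \<and> lo d \<le> hi c)"
  shows "acyclic {(c, d). c \<in> K \<and> d \<in> K \<and> c \<noteq> d \<and> lo c \<le> hi d}"
proof -
  have "wf {(c, d). c \<in> K \<and> d \<in> K \<and> c \<noteq> d \<and> lo c \<le> hi d}"
  proof (rule wfI_min)
    fix x :: 'x and Q assume "x \<in> Q"
    show "\<exists>b\<in>Q. \<forall>z. (z, b) \<in> {(c, d). c \<in> K \<and> d \<in> K \<and> c \<noteq> d \<and> lo c \<le> hi d} \<longrightarrow> z \<notin> Q"
    proof (cases "Q \<inter> K = {}")
      case True
      then show ?thesis using \<open>x \<in> Q\<close> by blast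
    next
      case False
      then obtain b where "b \<in> Q \<inter> K" "\<forall>z\<in>Q \<inter> K. z \<noteq> b \<longrightarrow> \<not> lo z \<le> hi b"
        using undominated_box_exists[of "Q \<inter> K" lo hi] assms by auto
      then show ?thesis by blast
    qed
  qed
  then show ?thesis by (rule wf_acyclic)
qed

lemma subdomain_eq_box:
  assumes "is_subdomain m n D"
  shows "D = {Min (fst ` D)..Max (fst ` D)} \<times> {Min (snd ` D)..Max (snd ` D)}"
proof -
  obtain x x' y y' where "x \<le> x'" "y \<le> y'" and D: "D = {x..x'} \<times> {y..y'}"
    using assms unfolding is_subdomain_def by blast
  then have "fst ` D = {x..x'}" "snd ` D = {y..y'}" by auto
  moreover have "Min {x..x'} = x" "Max {x..x'} = x'" "Min {y..y'} = y" "Max {y..y'} = y'"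
    using \<open>x \<le> x'\<close> \<open>y \<le> y'\<close> by (auto intro: Min_eqI Max_eqI)
  ultimately show ?thesis using D by simp
qed

(* A neighbour pair relates the boxes of its two symbols when every position lies in the
   box of its symbol: the boxes share a row for horizontal pairs and a column for vertical
   ones, and the box of the first symbol starts weakly before the box of the second ends. *)
lemma neighbour_pairs_boxes:
  fixes a1 a2 b1 b2 :: "'a \<Rightarrow> nat"
  assumes in_box: "\<And>i j. i \<in> {1..m} \<Longrightarrow> j \<in> {1..n} \<Longrightarrow>
      a1 (p i j) \<le> i \<and> i \<le> a2 (p i j) \<and> b1 (p i j) \<le> j \<and> j \<le> b2 (p i j)"
  shows "(c, d) \<in> horiz_pairs m n p \<Longrightarrow> a1 c \<le> a2 d \<and> a1 d \<le> a2 c \<and> b1 c \<le> b2 d"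
    and "(c, d) \<in> vert_pairs m n p \<Longrightarrow> a1 c \<le> a2 d \<and> b1 c \<le> b2 d \<and> b1 d \<le> b2 c"
proof -
  assume "(c, d) \<in> horiz_pairs m n p"
  then obtain i j where "c = p i j" "d = p i (j + 1)" "i \<in> {1..m}" "j \<in> {1..n}" "j + 1 \<in> {1..n}"
    unfolding horiz_pairs_def by force
  then show "a1 c \<le> a2 d \<and> a1 d \<le> a2 c \<and> b1 c \<le> b2 d"
    using in_box[of i j] in_box[of i "j + 1"] by force
next
  assume "(c, d) \<in> vert_pairs m n p"
  then obtain i j where "c = p i j" "d = p (i + 1) j" "i \<in> {1..m}" "i + 1 \<in> {1..m}" "j \<in> {1..n}"
    unfolding vert_pairs_def by force
  then show "a1 c \<le> a2 d \<and> b1 c \<le> b2 d \<and> b1 d \<le> b2 c"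
    using in_box[of i j] in_box[of "i + 1" j] by force
qed

(* Colour classes of distinct symbols that are rectangles cannot overlap in both their row
   and their column ranges, as they would share a position. *)
lemma colour_boxes_disjoint:
  assumes "colour_class m n p c = {a1..a2} \<times> {b1..b2}" "colour_class m n p d = {a1'..a2'} \<times> {b1'..b2'}"
    and "a1 \<le> a2" "b1 \<le> b2" "a1' \<le> a2'" "b1' \<le> b2'"
    and "a1 \<le> a2'" "a1' \<le> a2" "b1 \<le> b2'" "b1' \<le> b2"
  shows "c = d"
proof -
  have "(max a1 a1', max b1 b1') \<in> colour_class m n p c \<inter> colour_class m n p d"
    unfolding assms(1,2) using assms(3-) by auto
  then show "c = d" unfolding colour_class_def by auto
qed

(* If all colour classes are rectangles, both neighbour graphs are acyclic: an edge of A
   from c to d means the box of c dominates that of d, and the same holds for A' after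
   reversing the column order. *)
lemma boxed_colours_imp_acyclic:
  fixes a1 a2 b1 b2 :: "'a \<Rightarrow> nat"
  assumes box: "\<And>i j. i \<in> {1..m} \<Longrightarrow> j \<in> {1..n} \<Longrightarrow>
      colour_class m n p (p i j) = {a1 (p i j)..a2 (p i j)} \<times> {b1 (p i j)..b2 (p i j)}"
  shows "acyclic (horiz_pairs m n p \<union> vert_pairs m n p)"
    and "acyclic ((horiz_pairs m n p)\<inverse> \<union> vert_pairs m n p)"
proof -
  define K where "K = (\<lambda>(i, j). p i j) ` ({1..m} \<times> {1..n})"
  have "finite K" unfolding K_def by simp
  have box_K: "colour_class m n p c = {a1 c..a2 c} \<times> {b1 c..b2 c}" if "c \<in> K" for c
    using that box unfolding K_def by auto
  have in_box: "a1 (p i j) \<le> i \<and> i \<le> a2 (p i j) \<and> b1 (p i j) \<le> j \<and> j \<le> b2 (p i j)"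
    if "i \<in> {1..m}" "j \<in> {1..n}" for i j
  proof -
    have "(i, j) \<in> colour_class m n p (p i j)" using that unfolding colour_class_def by simp
    then show ?thesis unfolding box[OF that] by simp
  qed
  have nonempty: "a1 c \<le> a2 c \<and> b1 c \<le> b2 c" if "c \<in> K" for c
    using that in_box unfolding K_def by force
  have disjoint: "c = d"
    if cd: "c \<in> K" "d \<in> K" and "a1 c \<le> a2 d" "a1 d \<le> a2 c" "b1 c \<le> b2 d" "b1 d \<le> b2 c" for c d
    using colour_boxes_disjoint[OF box_K[OF cd(1)] box_K[OF cd(2)]] nonempty[OF cd(1)] nonempty[OF cd(2)] that
    by blast
  have pairs_in_K: "horiz_pairs m n p \<union> vert_pairs m n p \<subseteq> {(c, d). c \<in> K \<and> d \<in> K \<and> c \<noteq> d}"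
    unfolding horiz_pairs_def vert_pairs_def K_def by force
  note edge = neighbour_pairs_boxes[of m n a1 p a2 b1 b2, OF in_box]
  show "acyclic (horiz_pairs m n p \<union> vert_pairs m n p)"
  proof (rule acyclic_subset)
    show "acyclic {(c, d). c \<in> K \<and> d \<in> K \<and> c \<noteq> d \<and> (a1 c, b1 c) \<le> (a2 d, b2 d)}"
      using \<open>finite K\<close> nonempty disjoint by (intro dominance_acyclic) auto
    show "horiz_pairs m n p \<union> vert_pairs m n p
        \<subseteq> {(c, d). c \<in> K \<and> d \<in> K \<and> c \<noteq> d \<and> (a1 c, b1 c) \<le> (a2 d, b2 d)}"
      using pairs_in_K edge by auto
  qed
  show "acyclic ((horiz_pairs m n p)\<inverse> \<union> vert_pairs m n p)"
  proof (rule acyclic_subset)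
    show "acyclic {(c, d). c \<in> K \<and> d \<in> K \<and> c \<noteq> d \<and>
        (a1 c, - int (b2 c)) \<le> (a2 d, - int (b1 d))}"
      using \<open>finite K\<close> nonempty disjoint by (intro dominance_acyclic) auto
    show "(horiz_pairs m n p)\<inverse> \<union> vert_pairs m n p
        \<subseteq> {(c, d). c \<in> K \<and> d \<in> K \<and> c \<noteq> d \<and> (a1 c, - int (b2 c)) \<le> (a2 d, - int (b1 d))}"
      using pairs_in_K edge by auto
  qed
qed

lemma regional_imp_acyclic:
  assumes "regional m n p"
  shows "acyclic (horiz_pairs m n p \<union> vert_pairs m n p)"
    and "acyclic ((horiz_pairs m n p)\<inverse> \<union> vert_pairs m n p)"
proof -
  let ?C = "colour_class m n p"
  have box: "?C (p i j) = {Min (fst ` ?C (p i j))..Max (fst ` ?C (p i j))} \<times>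
      {Min (snd ` ?C (p i j))..Max (snd ` ?C (p i j))}" if "i \<in> {1..m}" "j \<in> {1..n}" for i j
    using assms that subdomain_eq_box unfolding regional_iff_colour_classes by blast
  show "acyclic (horiz_pairs m n p \<union> vert_pairs m n p)"
    by (rule boxed_colours_imp_acyclic(1)[OF box])
  show "acyclic ((horiz_pairs m n p)\<inverse> \<union> vert_pairs m n p)"
    by (rule boxed_colours_imp_acyclic(2)[OF box])
qed

(* The main result. *)
theorem proposition3:
  fixes \<Sigma> :: "'a set" and m n :: nat and p :: "nat \<Rightarrow> nat \<Rightarrow> 'a"
  assumes "finite \<Sigma>"
    and "is_picture \<Sigma> m n p"
  shows "regional m n p \<longleftrightarrow>
           (let \<theta> = tiles (m + 2) (n + 2) (frame m n p)
            in acyclic (restrict_sigma \<Sigma> (A_set \<theta>)) \<and> acyclic (restrict_sigma \<Sigma> (A'_set \<theta>)))"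
  unfolding Let_def adjacency_graphs_of_picture[OF assms(2)]
  using regional_imp_acyclic acyclic_imp_regional by blast

end
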